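(* Let $H_n=\sum_{j=1}^n\frac1j$, let $\gamma$ be the Euler–Mascheroni constant, $\Gamma$ the gamma function, and for real $z$ and positive integer $k$ let $z^{\overline{k}} = z(z+1) \cdots (z + k -1)$ be the rising factorial (Pochhammer symbol). For $k \in \{1, 2, 3, \ldots \}$ and $x > 0$, $$\sum_{n=1}^\infty (-1)^n \left(H_n -\log\sqrt[k]{(n+ x - 1)^{\overline{k}}} - \gamma \right) = \frac{\gamma}{2} + \frac{1}{k}\log\left[\frac{\Gamma\left(\frac{x+k}{2}\right)}{ \Gamma\left(\frac{x}{2} \right)}\right].$$ *)

theory Defs
  imports "HOL-Analysis.Analysis"
begin

end

theory Submission
  imports Defs "HOL-Real_Asymp.Real_Asymp" "HOL-Probability.Characteristic_Functions"
begin

(*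
  Grouping the terms n = 2m + 1 and n = 2m + 2, the Pochhammer symbols telescope because
  (z + 1)^(k rising) / z^(k rising) = (z + k) / z.  With b = x/2 and b' = (x + k)/2 the
  2M-th partial sum is therefore  H_M / 2 - (log b'^(M rising) - log b^(M rising)) / k.
  By Euler's limit formula for Gamma,  log b'^(M rising) - log b^(M rising) - (k/2) log M
  tends to log Gamma b - log Gamma b', and H_M - log M tends to gamma, which gives the value.
  The odd partial sums have the same limit since the terms tend to 0.
*)

lemma even_partial_sums_imp_sums:
  fixes f :: "nat \<Rightarrow> 'a :: real_normed_vector"
  assumes "f \<longlonglongrightarrow> 0" and "(\<lambda>M. \<Sum>m<2 * M. f m) \<longlonglongrightarrow> l"
  shows "f sums l"
proof -
  have "strict_mono (\<lambda>M::nat. 2 * M)"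
    by (simp add: strict_mono_def)
  with assms(1) have "(\<lambda>M. f (2 * M)) \<longlonglongrightarrow> 0"
    using LIMSEQ_subseq_LIMSEQ unfolding comp_def by blast
  with assms(2) have "(\<lambda>M. (\<Sum>m<2 * M. f m) + f (2 * M)) \<longlonglongrightarrow> l + 0"
    by (rule tendsto_add)
  then have "(\<lambda>M. \<Sum>m<2 * M + 1. f m) \<longlonglongrightarrow> l"
    by simp
  with assms(2) show ?thesis
    unfolding sums_def by (rule limseq_even_odd)
qed

lemma sum_alternating_pairs:
  fixes a :: "nat \<Rightarrow> 'a :: ring_1"
  shows "(\<Sum>m<2 * M. (-1) ^ (m + 1) * a (m + 1)) = (\<Sum>m<M. a (2 * m + 2) - a (2 * m + 1))"
  by (induction M) simp_all

lemma ln_pochhammer_eq_sum_ln: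
  fixes z :: real
  assumes "z > 0"
  shows "ln (pochhammer z n) = (\<Sum>i<n. ln (z + real i))"
proof (induction n)
  case (Suc n)
  have "z + real n > 0" using assms by simp
  then show ?case
    using Suc.IH by (simp add: pochhammer_Suc ln_mult_pos[OF pochhammer_pos[OF assms]])
qed simp

lemma ln_pochhammer_shift_diff:
  fixes z :: real
  assumes "z > 0"
  shows "ln (pochhammer (z + 1) k) - ln (pochhammer z k) = ln (z + real k) - ln z"
proof -
  have "z * pochhammer (z + 1) k = (z + real k) * pochhammer z k"
    using pochhammer_rec[of z k] pochhammer_rec'[of z k] by simp
  then have "ln (z * pochhammer (z + 1) k) = ln ((z + real k) * pochhammer z k)"
    by simp
  moreover have "z + real k > 0" "z + 1 > 0"
    using assms by simp_all
  ultimately show ?thesis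
    using assms by (simp add: ln_mult_pos pochhammer_pos)
qed

lemma ln_pochhammer_shift_LIMSEQ:
  fixes c :: real
  shows "(\<lambda>n. ln (pochhammer (real n + c) k) - real k * ln (real n)) \<longlonglongrightarrow> 0"
proof (induction k)
  case 0
  then show ?case by simp
next
  case (Suc k)
  have "(\<lambda>n. (ln (pochhammer (real n + c) k) - real k * ln (real n))
            + (ln (real n + (c + real k)) - ln (real n))) \<longlonglongrightarrow> 0 + 0"
    by (intro tendsto_add Suc.IH) real_asymp
  moreover have "eventually (\<lambda>n. (ln (pochhammer (real n + c) k) - real k * ln (real n))
            + (ln (real n + (c + real k)) - ln (real n))
          = ln (pochhammer (real n + c) (Suc k)) - real (Suc k) * ln (real n)) sequentially"
    using eventually_gt_at_top[of "nat \<lceil>\<bar>c\<bar>\<rceil>"]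
  proof eventually_elim
    case (elim n)
    then have pos: "real n + c > 0" by linarith
    have "pochhammer (real n + c) (Suc k) = pochhammer (real n + c) k * (real n + (c + real k))"
      by (simp add: pochhammer_Suc add.assoc)
    then have "ln (pochhammer (real n + c) (Suc k))
        = ln (pochhammer (real n + c) k) + ln (real n + (c + real k))"
      using pos by (simp add: ln_mult_pos pochhammer_pos)
    then show ?case
      by (simp add: algebra_simps)
  qed
  ultimately show ?case
    by (simp add: tendsto_cong)
qed

lemma ln_Gamma_series'_real:
  fixes z :: real
  assumes "z > 0" and "n > 0"
  shows "ln (Gamma_series' z n) = ln (fact (n - 1)) + z * ln (real n) - ln (pochhammer z n)"
proof -
  have "fact (n - 1) * exp (z * ln (real n)) > (0 :: real)" by simp
  then show ?thesis
    unfolding Gamma_series'_def using pochhammer_pos[OF assms(1), of n]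
    by (simp add: ln_div ln_mult del: mult_exp_exp)
qed

lemma ln_pochhammer_diff_LIMSEQ:
  fixes a b :: real
  assumes "a > 0" and "b > 0"
  shows "(\<lambda>n. ln (pochhammer a n) - ln (pochhammer b n) - (a - b) * ln (real n))
           \<longlonglongrightarrow> ln (Gamma b) - ln (Gamma a)"
proof -
  have "(\<lambda>n. ln (Gamma_series' b n) - ln (Gamma_series' a n)) \<longlonglongrightarrow> ln (Gamma b) - ln (Gamma a)"
    using Gamma_real_pos[OF assms(1)] Gamma_real_pos[OF assms(2)]
    by (intro tendsto_intros Gamma_series'_LIMSEQ) auto
  moreover have "eventually (\<lambda>n. ln (Gamma_series' b n) - ln (Gamma_series' a n)
      = ln (pochhammer a n) - ln (pochhammer b n) - (a - b) * ln (real n)) sequentially"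
    using eventually_gt_at_top[of 0]
    by eventually_elim (simp add: assms ln_Gamma_series'_real algebra_simps)
  ultimately show ?thesis
    by (simp add: tendsto_cong)
qed

lemma harm_ln_pochhammer_LIMSEQ:
  fixes c :: real
  assumes "k > 0"
  shows "(\<lambda>n. harm n - ln (pochhammer (real n + c) k) / real k - euler_mascheroni) \<longlonglongrightarrow> 0"
proof -
  have "(\<lambda>n. (harm n - ln (real n) - euler_mascheroni)
          - (ln (pochhammer (real n + c) k) - real k * ln (real n)) / real k)
        \<longlonglongrightarrow> (euler_mascheroni - euler_mascheroni) - 0 / real k"
    by (intro tendsto_intros euler_mascheroni_LIMSEQ ln_pochhammer_shift_LIMSEQ) (use assms in simp)
  moreover have "(harm n - ln (real n) - euler_mascheroni)
          - (ln (pochhammer (real n + c) k) - real k * ln (real n)) / real k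
        = harm n - ln (pochhammer (real n + c) k) / real k - euler_mascheroni" for n
    using assms by (simp add: diff_divide_distrib)
  ultimately show ?thesis
    by simp
qed

lemma harm_ln_pochhammer_diff_LIMSEQ:
  fixes a b :: real
  assumes "a > 0" and "b > 0"
  shows "(\<lambda>n. (a - b) * harm n - (ln (pochhammer a n) - ln (pochhammer b n)))
           \<longlonglongrightarrow> (a - b) * euler_mascheroni + ln (Gamma a) - ln (Gamma b)"
proof -
  have "(\<lambda>n. (a - b) * (harm n - ln (real n))
          - (ln (pochhammer a n) - ln (pochhammer b n) - (a - b) * ln (real n)))
        \<longlonglongrightarrow> (a - b) * euler_mascheroni - (ln (Gamma b) - ln (Gamma a))"
    using assms by (intro tendsto_intros euler_mascheroni_LIMSEQ ln_pochhammer_diff_LIMSEQ)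
  then show ?thesis
    by (simp add: algebra_simps)
qed

lemma harm_ln_pochhammer_pair_diff:
  fixes x c :: real and k :: nat
  assumes "x > 0"
  defines "a \<equiv> \<lambda>n. harm n - ln (pochhammer (real n + x - 1) k) / real k - c"
  shows "a (2 * m + 2) - a (2 * m + 1)
       = inverse (real (Suc m)) / 2 - (ln ((x + real k) / 2 + real m) - ln (x / 2 + real m)) / real k"
proof -
  define z where "z = 2 * real m + x"
  have "z > 0" using assms(1) by (simp add: z_def)
  have harm_step: "harm (2 * m + 2) - harm (2 * m + 1) = inverse (real (Suc m)) / (2 :: real)"
    using harm_Suc[of "2 * m + 1", where 'a = real] by (simp add: field_simps)
  have poch_step: "ln (pochhammer (z + 1) k) - ln (pochhammer z k)
      = ln ((x + real k) / 2 + real m) - ln (x / 2 + real m)"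
  proof -
    have "ln (z + real k) = ln 2 + ln ((x + real k) / 2 + real m)"
      using assms(1) ln_mult_pos[of 2 "(x + real k) / 2 + real m"]
      by (simp add: z_def add_divide_distrib algebra_simps)
    moreover have "ln z = ln 2 + ln (x / 2 + real m)"
      using assms(1) ln_mult_pos[of 2 "x / 2 + real m"] by (simp add: z_def algebra_simps)
    ultimately show ?thesis
      using ln_pochhammer_shift_diff[OF \<open>z > 0\<close>, of k] by simp
  qed
  have shift: "real (2 * m + 2) + x - 1 = z + 1" "real (2 * m + 1) + x - 1 = z"
    by (simp_all add: z_def)
  have "a (2 * m + 2) - a (2 * m + 1)
      = (harm (2 * m + 2) - harm (2 * m + 1)) - (ln (pochhammer (z + 1) k) - ln (pochhammer z k)) / real k"
    unfolding a_def shift by (simp add: diff_divide_distrib)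
  then show ?thesis
    unfolding harm_step poch_step .
qed

lemma alternating_harm_ln_pochhammer_even_partial_sums:
  fixes x c :: real and k :: nat
  assumes "x > 0"
  defines "a \<equiv> \<lambda>n. harm n - ln (pochhammer (real n + x - 1) k) / real k - c"
  shows "(\<Sum>m<2 * M. (-1) ^ (m + 1) * a (m + 1))
       = harm M / 2 - (ln (pochhammer ((x + real k) / 2) M) - ln (pochhammer (x / 2) M)) / real k"
proof -
  have pair: "a (2 * m + 2) - a (2 * m + 1)
      = inverse (real (Suc m)) / 2 - (ln ((x + real k) / 2 + real m) - ln (x / 2 + real m)) / real k"
    for m
    unfolding a_def by (rule harm_ln_pochhammer_pair_diff[OF assms(1)])
  have "(\<Sum>m<2 * M. (-1) ^ (m + 1) * a (m + 1)) = (\<Sum>m<M. a (2 * m + 2) - a (2 * m + 1))"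
    by (rule sum_alternating_pairs)
  also have "\<dots> = (\<Sum>m<M. inverse (real (Suc m))) / 2
        - ((\<Sum>m<M. ln ((x + real k) / 2 + real m)) - (\<Sum>m<M. ln (x / 2 + real m))) / real k"
    by (simp only: pair sum_subtractf flip: sum_divide_distrib)
  also have "\<dots> = harm M / 2 - (ln (pochhammer ((x + real k) / 2) M) - ln (pochhammer (x / 2) M)) / real k"
    using assms(1) by (simp add: harm_altdef ln_pochhammer_eq_sum_ln)
  finally show ?thesis .
qed

theorem mainTheorem10:
  fixes k :: nat and x :: real
  assumes "k \<ge> 1" and "x > 0"
  shows "(\<lambda>m. let n = m + 1 in
            (-1) ^ n * (harm n - ln (root k (pochhammer (real n + x - 1) k)) - euler_mascheroni))
         sums (euler_mascheroni / 2 + (1 / real k) * ln (Gamma ((x + real k) / 2) / Gamma (x / 2)))"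
proof -
  define a where "a n = harm n - ln (pochhammer (real n + x - 1) k) / real k - euler_mascheroni"
    for n :: nat
  let ?b\<^sub>0 = "x / 2" and ?b\<^sub>k = "(x + real k) / 2"
  have k: "k > 0" using assms(1) by simp
  have term_eq: "(\<lambda>m. let n = m + 1 in
            (-1) ^ n * (harm n - ln (root k (pochhammer (real n + x - 1) k)) - euler_mascheroni))
      = (\<lambda>m. (-1) ^ (m + 1) * a (m + 1))"
    using k by (simp add: a_def ln_root Let_def)
  have "a \<longlonglongrightarrow> 0"
    unfolding a_def using harm_ln_pochhammer_LIMSEQ[OF k, of "x - 1"] by (simp add: add_diff_eq)
  then have a_Suc_lim: "(\<lambda>m. a (Suc m)) \<longlonglongrightarrow> 0"
    by (rule LIMSEQ_Suc)
  have terms_lim: "(\<lambda>m. (-1) ^ (m + 1) * a (m + 1)) \<longlonglongrightarrow> 0"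
    by (rule tendsto_norm_zero_cancel) (simp add: abs_mult tendsto_rabs_zero_iff a_Suc_lim)
  have "(\<lambda>M. ((?b\<^sub>k - ?b\<^sub>0) * harm M - (ln (pochhammer ?b\<^sub>k M) - ln (pochhammer ?b\<^sub>0 M))) / real k)
      \<longlonglongrightarrow> ((?b\<^sub>k - ?b\<^sub>0) * euler_mascheroni + ln (Gamma ?b\<^sub>k) - ln (Gamma ?b\<^sub>0)) / real k"
    using assms(2) k by (intro tendsto_divide tendsto_const harm_ln_pochhammer_diff_LIMSEQ) simp_all
  then have "(\<lambda>M. \<Sum>m<2 * M. (-1) ^ (m + 1) * a (m + 1))
      \<longlonglongrightarrow> euler_mascheroni / 2 + (1 / real k) * ln (Gamma ?b\<^sub>k / Gamma ?b\<^sub>0)"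
    unfolding a_def alternating_harm_ln_pochhammer_even_partial_sums[OF assms(2)]
    using k assms(2) Gamma_real_pos[of ?b\<^sub>k] Gamma_real_pos[of ?b\<^sub>0]
    by (simp add: ln_divide_pos diff_divide_distrib add_divide_distrib add_diff_eq)
  with terms_lim show ?thesis
    unfolding term_eq by (rule even_partial_sums_imp_sums)
qed

end
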